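(* Every rotation $R$ of $\mathbb{R}^4$ can be written as $R=R_0\circ R^{xw}_\psi\circ R^{zw}_\phi\circ R^{xy}_\theta$ for some angles $\theta,\phi,\psi$ and some rotation $R_0$ of $\mathbb{R}^4$ that is the trivial extension of a rotation of $\mathbb{R}^3=\{(x,y,z,0)\}$ (i.e. $R_0$ fixes $(0,0,0,1)$ and maps $\{(x,y,z,0)\}$ to itself).
   Context: A rotation of $\mathbb{R}^n$ is a linear map whose matrix is orthogonal with determinant $1$. Denote coordinates of $\mathbb{R}^4$ by $(x,y,z,w)$ (indices $1,2,3,4$). For coordinate indices $k<j$, the elementary rotation $R^{kj}_\alpha$ is the linear map of $\mathbb{R}^4$ that fixes the other two standard basis vectors and acts on the $k,j$ coordinate plane by $\mathbf{e}_k\mapsto\cos\alpha\,\mathbf{e}_k+\sin\alpha\,\mathbf{e}_j$, $\mathbf{e}_j\mapsto-\sin\alpha\,\mathbf{e}_k+\cos\alpha\,\mathbf{e}_j$. Thus $R^{xy}_\theta$, $R^{zw}_\phi$, $R^{xw}_\psi$ are the elementary rotations of the $x,y$-, $z,w$- and $x,w$-planes respectively. *)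

theory Defs
  imports "HOL-Analysis.Analysis"
begin

text \<open>Rotations of R^n as matrices (columns = images of standard basis vectors).\<close>
definition rotation :: "real^'n^'n \<Rightarrow> bool" where
  "rotation A \<longleftrightarrow> orthogonal_matrix A \<and> det A = 1"

definition elem_rot :: "4 \<Rightarrow> 4 \<Rightarrow> real \<Rightarrow> real^4^4" where
  "elem_rot k j a = (\<chi> r c.
     if r = k \<and> c = k then cos a
     else if r = j \<and> c = k then sin a
     else if r = k \<and> c = j then - sin a
     else if r = j \<and> c = j then cos a
     else if r = c then 1 else 0)"

end

theory Submission
  imports Defs
begin

text \<open>The fourth row of the rotation \<open>R\<close> is a unit vector. Written in Hopf coordinates it is the
  fourth row of \<open>A = R\<^sup>x\<^sup>w\<^sub>\<psi> R\<^sup>z\<^sup>w\<^sub>\<phi> R\<^sup>x\<^sup>y\<^sub>\<theta>\<close> for suitable angles. Then \<open>R\<^sub>0 = R A\<^sup>T\<close> is a rotation whose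
  fourth row is \<open>e\<^sub>4\<close>; being orthogonal, it fixes \<open>e\<^sub>4\<close> and hence preserves the hyperplane
  \<open>e\<^sub>4\<^sup>\<bottom>\<close>.\<close>

lemma rotation_mult:
  fixes A B :: "real^'n^'n"
  assumes "rotation A" "rotation B"
  shows "rotation (A ** B)"
  using assms by (simp add: rotation_def orthogonal_matrix_mul det_mul)

lemma rotation_transpose:
  fixes A :: "real^'n^'n"
  assumes "rotation A"
  shows "rotation (transpose A)"
  using assms by (simp add: rotation_def det_transpose)

lemma elem_rot_zero: "elem_rot k j 0 = mat 1"
  by (simp add: vec_eq_iff forall_4 elem_rot_def mat_def)

lemma transpose_elem_rot: "transpose (elem_rot k j a) = elem_rot k j (- a)"
  by (simp add: vec_eq_iff forall_4 elem_rot_def transpose_def)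

lemma elem_rot_add:
  assumes "k \<noteq> j"
  shows "elem_rot k j a ** elem_rot k j b = elem_rot k j (a + b)"
  using assms exhaust_4[of k] exhaust_4[of j]
  by (auto simp: vec_eq_iff forall_4 matrix_matrix_mult_def elem_rot_def sum_4 cos_add sin_add)

lemma rotation_elem_rot:
  assumes "k \<noteq> j"
  shows "rotation (elem_rot k j a)"
proof -
  have orth: "orthogonal_matrix (elem_rot k j b)" for b
    unfolding orthogonal_matrix_def transpose_elem_rot
    by (simp add: elem_rot_add[OF assms] elem_rot_zero)
  \<comment> \<open>The determinant is \<open>\<plusminus>1\<close>, and it is a square since the rotation by \<open>a\<close> is twice the rotation by \<open>a/2\<close>.\<close>
  have "det (elem_rot k j a) = (det (elem_rot k j (a/2)))\<^sup>2"
    using elem_rot_add[OF assms, of "a/2" "a/2"]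
    by (simp add: power2_eq_square flip: det_mul)
  moreover have "det (elem_rot k j a) = 1 \<or> det (elem_rot k j a) = -1"
    using det_orthogonal_matrix[OF orth] .
  ultimately have "det (elem_rot k j a) = 1"
    by (metis zero_le_power2 neg_0_le_iff_le not_one_le_zero)
  with orth show ?thesis
    by (simp add: rotation_def)
qed

lemma real_polar_coordinates:
  fixes a b :: real
  shows "\<exists>t. a = sqrt (a\<^sup>2 + b\<^sup>2) * cos t \<and> b = sqrt (a\<^sup>2 + b\<^sup>2) * sin t"
proof -
  let ?z = "Complex a b"
  have "rcis (cmod ?z) (Arg ?z) = ?z"
    by (rule rcis_cmod_Arg)
  then have "a = cmod ?z * cos (Arg ?z) \<and> b = cmod ?z * sin (Arg ?z)"
    by (metis complex.sel Re_rcis Im_rcis)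
  then show ?thesis
    by (auto simp: cmod_def)
qed

lemma unit_sphere_hopf_coordinates:
  fixes a b c d :: real
  assumes "a\<^sup>2 + b\<^sup>2 + c\<^sup>2 + d\<^sup>2 = 1"
  obtains \<theta> \<phi> \<psi> where
    "a = sin \<psi> * cos \<theta>" "b = sin \<psi> * sin \<theta>" "c = cos \<psi> * sin \<phi>" "d = cos \<psi> * cos \<phi>"
proof -
  define \<rho> where "\<rho> = sqrt (c\<^sup>2 + d\<^sup>2)"
  define \<sigma> where "\<sigma> = sqrt (a\<^sup>2 + b\<^sup>2)"
  obtain \<theta> where \<theta>: "a = \<sigma> * cos \<theta>" "b = \<sigma> * sin \<theta>"
    using real_polar_coordinates[of a b] unfolding \<sigma>_def by blast
  obtain \<phi> where \<phi>: "d = \<rho> * cos \<phi>" "c = \<rho> * sin \<phi>"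
    using real_polar_coordinates[of d c] unfolding \<rho>_def by (auto simp: add.commute)
  have "\<rho>\<^sup>2 + \<sigma>\<^sup>2 = 1"
    using assms by (simp add: \<rho>_def \<sigma>_def algebra_simps)
  then obtain \<psi> where \<psi>: "\<rho> = cos \<psi>" "\<sigma> = sin \<psi>"
    using real_polar_coordinates[of \<rho> \<sigma>] by auto
  show ?thesis
    by (rule that[of \<psi> \<theta> \<phi>]) (simp_all add: \<theta> \<phi> \<psi>)
qed

lemma row4_elem_rot_product_surj:
  fixes u :: "real^4"
  assumes "norm u = 1"
  obtains \<theta> \<phi> \<psi> where "row 4 (elem_rot 1 4 \<psi> ** elem_rot 3 4 \<phi> ** elem_rot 1 2 \<theta>) = u"
proof -
  have "(u$1)\<^sup>2 + (u$2)\<^sup>2 + (u$3)\<^sup>2 + (u$4)\<^sup>2 = 1"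
    using assms by (simp add: norm_eq_1 inner_vec_def sum_4 power2_eq_square)
  then obtain \<theta> \<phi> \<psi> where
    "u$1 = sin \<psi> * cos \<theta>" "u$2 = sin \<psi> * sin \<theta>" "u$3 = cos \<psi> * sin \<phi>" "u$4 = cos \<psi> * cos \<phi>"
    by (rule unit_sphere_hopf_coordinates)
  then have "row 4 (elem_rot 1 4 \<psi> ** elem_rot 3 4 \<phi> ** elem_rot 1 2 (- \<theta>)) = u"
    by (simp add: vec_eq_iff forall_4 row_def matrix_matrix_mult_def elem_rot_def sum_4)
  then show ?thesis
    by (rule that)
qed

lemma orthogonal_matrix_mul_transpose_fixes_axis:
  fixes R A :: "real^'n^'n"
  assumes "orthogonal_matrix R" "row i R = row i A"
  shows "(R ** transpose A) *v axis i 1 = axis i 1"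
proof -
  have row: "transpose M *v axis i 1 = row i M" for M :: "real^'n^'n"
    by (simp only: matrix_vector_mult_basis column_transpose)
  have "(R ** transpose A) *v axis i 1 = R *v row i A"
    by (simp only: matrix_vector_mul_assoc[symmetric] row)
  also have "\<dots> = (R ** transpose R) *v axis i 1"
    by (simp only: assms(2)[symmetric] matrix_vector_mul_assoc[symmetric] row)
  also have "\<dots> = axis i 1"
    using assms(1) by (simp add: orthogonal_matrix_def)
  finally show ?thesis .
qed

lemma orthogonal_matrix_fixing_axis_preserves_coordinate:
  fixes Q :: "real^'n^'n"
  assumes "orthogonal_matrix Q" "Q *v axis i 1 = axis i 1"
  shows "(Q *v v) $ i = v $ i"
proof -
  have "orthogonal_transformation ((*v) Q)"
    using assms(1) by (simp add: orthogonal_transformation_matrix)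
  then have "(Q *v v) \<bullet> (Q *v axis i 1) = v \<bullet> axis i 1"
    by (simp add: orthogonal_transformation_def)
  then show ?thesis
    by (simp add: assms(2) cart_eq_inner_axis)
qed

theorem theorem3:
  fixes R :: "real^4^4"
  assumes "rotation R"
  shows "\<exists>R0 \<theta> \<phi> \<psi>.
           rotation R0 \<and>
           R0 *v axis 4 1 = axis 4 1 \<and>
           (\<forall>v::real^4. v $ 4 = 0 \<longrightarrow> (R0 *v v) $ 4 = 0) \<and>
           R = R0 ** elem_rot 1 4 \<psi> ** elem_rot 3 4 \<phi> ** elem_rot 1 2 \<theta>"
proof -
  have orth: "orthogonal_matrix R"
    using assms by (simp add: rotation_def)
  then obtain \<theta> \<phi> \<psi> where row4: "row 4 (elem_rot 1 4 \<psi> ** elem_rot 3 4 \<phi> ** elem_rot 1 2 \<theta>) = row 4 R"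
    by (meson orthogonal_matrix_orthonormal_rows row4_elem_rot_product_surj)
  define A where "A = elem_rot 1 4 \<psi> ** elem_rot 3 4 \<phi> ** elem_rot 1 2 \<theta>"
  have "rotation A"
    unfolding A_def by (intro rotation_mult rotation_elem_rot) simp_all
  define R0 where "R0 = R ** transpose A"
  have "rotation R0"
    unfolding R0_def using assms \<open>rotation A\<close> by (intro rotation_mult rotation_transpose)
  moreover have fix4: "R0 *v axis 4 1 = axis 4 1"
    unfolding R0_def using orth row4 by (simp add: A_def orthogonal_matrix_mul_transpose_fixes_axis)
  moreover have "\<forall>v::real^4. v $ 4 = 0 \<longrightarrow> (R0 *v v) $ 4 = 0"
    using \<open>rotation R0\<close> orthogonal_matrix_fixing_axis_preserves_coordinate[OF _ fix4]
    by (simp add: rotation_def)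
  moreover have "R = R0 ** A"
    using \<open>rotation A\<close> unfolding R0_def rotation_def orthogonal_matrix
    by (metis matrix_mul_assoc matrix_mul_rid)
  then have "R = R0 ** elem_rot 1 4 \<psi> ** elem_rot 3 4 \<phi> ** elem_rot 1 2 \<theta>"
    by (simp add: A_def matrix_mul_assoc)
  ultimately show ?thesis
    by blast
qed

end
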